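(* Let $c$ be a $k$-valued function on $S$ with finite non-empty support (and not identically zero). Then there exist $X\in\mathfrak{gl}_\infty(k)$ and $Y\in\mathfrak{gl}_\infty(\mathcal U_1)$ such that $\sum_{w\in S}c(w)\,\mathrm{Tr}(w(X,Y))\neq0$.
   Context: $k$ has characteristic $0$. $\mathcal U=k[u_1,u_2,\dots]$ is the free graded-commutative algebra on countably many generators $u_i$ of homological degree $1$, and $\mathcal U_1$ its degree-$1$ part. $\mathfrak{gl}_\infty(B)=\varinjlim_n\mathbb M_n(B)$ denotes finite matrices. Consider the free graded algebra $k\langle x,y\rangle$ with $x$ of degree $0$ and $y$ of degree $1$; define $\tau(v_1\cdots v_n)=(-1)^{|v_n||v_1\cdots v_{n-1}|}v_nv_1\cdots v_{n-1}$ on words and $\mathrm N=1+\tau+\dots+\tau^{n-1}$ on words of length $n$. $S$ is a set consisting of one representative word for each cyclic word (class of words under cyclic permutation) $w$ of positive length with $\mathrm N(w)\neq0$; for $X,Y$ matrices, $w(X,Y)$ is obtained by substituting $X$ for $x$ and $Y$ for $y$. *)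

theory Defs
  imports Main
begin

datatype letter = LX | LY

fun ldeg :: "letter \<Rightarrow> nat" where
  "ldeg LX = 0" | "ldeg LY = 1"

definition wdeg :: "letter list \<Rightarrow> nat" where
  "wdeg w = sum_list (map ldeg w)"

text \<open>Elements of k<x,y> are finitely supported functions (letter list => k).
  The operator tau acts on a signed word (c, w).\<close>
definition tau :: "('a::field_char_0) \<times> letter list \<Rightarrow> 'a \<times> letter list" where
  "tau cw = (case cw of (c, w) \<Rightarrow>
     if w = [] then (c, w)
     else (c * (-1) ^ (ldeg (last w) * wdeg (butlast w)), last w # butlast w))"

definition normN :: "letter list \<Rightarrow> letter list \<Rightarrow> 'a::field_char_0" where
  "normN w = (\<lambda>v. \<Sum>j<length w. (case (tau ^^ j) ((1::'a), w) of (c, u) \<Rightarrow> if u = v then c else 0))"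

definition rep_set :: "'a::field_char_0 itself \<Rightarrow> letter list set \<Rightarrow> bool" where
  "rep_set TYPE('a) S \<longleftrightarrow>
     S \<subseteq> {w. w \<noteq> [] \<and> (normN w :: letter list \<Rightarrow> 'a) \<noteq> (\<lambda>_. 0)} \<and>
     (\<forall>w. w \<noteq> [] \<and> (normN w :: letter list \<Rightarrow> 'a) \<noteq> (\<lambda>_. 0) \<longrightarrow>
        (\<exists>!s. s \<in> S \<and> (\<exists>j. s = rotate j w)))"

text \<open>The free graded-commutative algebra U = k[u_1,u_2,...] on odd generators (an exterior
  algebra), modelled as functions from finite index sets A (the monomial u_A with
  increasing indices) to coefficients.\<close>
type_synonym 'a U = "nat set \<Rightarrow> 'a"

definition ext_sign :: "nat set \<Rightarrow> nat set \<Rightarrow> 'a::field_char_0" where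
  "ext_sign A B = (-1) ^ card {(i, j). i \<in> A \<and> j \<in> B \<and> j < i}"

definition ext_mult :: "('a::field_char_0) U \<Rightarrow> 'a U \<Rightarrow> 'a U" where
  "ext_mult a b = (\<lambda>T. if finite T then (\<Sum>A\<in>Pow T. ext_sign A (T - A) * a A * b (T - A)) else 0)"

definition ext_scalar :: "'a::field_char_0 \<Rightarrow> 'a U" where
  "ext_scalar c = (\<lambda>T. if T = {} then c else 0)"

text \<open>Embedding of U_1: a finitely supported coefficient vector f gives sum_i f i * u_i.\<close>
definition ext_deg1 :: "(nat \<Rightarrow> 'a::field_char_0) \<Rightarrow> 'a U" where
  "ext_deg1 f = (\<lambda>T. if card T = 1 then f (the_elem T) else 0)"

definition mat_mult_U :: "nat \<Rightarrow> (nat \<Rightarrow> nat \<Rightarrow> ('a::field_char_0) U) \<Rightarrow> (nat \<Rightarrow> nat \<Rightarrow> 'a U) \<Rightarrow> nat \<Rightarrow> nat \<Rightarrow> 'a U" where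
  "mat_mult_U n M N = (\<lambda>i j T. \<Sum>l<n. ext_mult (M i l) (N l j) T)"

definition mat_one_U :: "nat \<Rightarrow> nat \<Rightarrow> ('a::field_char_0) U" where
  "mat_one_U = (\<lambda>i j. ext_scalar (if i = j then 1 else 0))"

fun word_mat :: "nat \<Rightarrow> (nat \<Rightarrow> nat \<Rightarrow> 'a::field_char_0) \<Rightarrow> (nat \<Rightarrow> nat \<Rightarrow> nat \<Rightarrow> 'a)
                 \<Rightarrow> letter list \<Rightarrow> nat \<Rightarrow> nat \<Rightarrow> 'a U" where
  "word_mat n X Y [] = mat_one_U"
| "word_mat n X Y (LX # w) = mat_mult_U n (\<lambda>i j. ext_scalar (X i j)) (word_mat n X Y w)"
| "word_mat n X Y (LY # w) = mat_mult_U n (\<lambda>i j. ext_deg1 (Y i j)) (word_mat n X Y w)"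

definition trace_U :: "nat \<Rightarrow> (nat \<Rightarrow> nat \<Rightarrow> ('a::field_char_0) U) \<Rightarrow> 'a U" where
  "trace_U n M = (\<lambda>T. \<Sum>i<n. M i i T)"

end

theory Submission
  imports Defs
begin

text \<open>Pick a word \<open>w\<close> of maximal length in the support of \<open>c\<close> and a word \<open>v\<close> with
  \<open>N(w)(v) \<noteq> 0\<close>; then \<open>v\<close> is a rotation of \<open>w\<close>. Let \<open>X\<close> and \<open>Y\<close> be the weighted adjacency
  matrices of the directed cycle \<open>0 \<rightarrow> 1 \<rightarrow> \<dots> \<rightarrow> m - 1 \<rightarrow> 0\<close>, \<open>m = |v|\<close>, where the edge leaving
  \<open>i\<close> carries \<open>1\<close> in \<open>X\<close> if \<open>v\<^sub>i = x\<close> and \<open>u\<^sub>i\<close> in \<open>Y\<close> if \<open>v\<^sub>i = y\<close>. Then \<open>Tr(u(X,Y))\<close> is a sum over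
  the closed walks around the cycle spelling \<open>u\<close>, so it vanishes unless \<open>m\<close> divides \<open>|u|\<close>;
  by maximality only rotations of \<open>v\<close> survive, and among the representatives this is \<open>w\<close>
  alone. Finally, the coefficient of the monomial \<open>u\<^sub>T\<close>, \<open>T\<close> the set of \<open>y\<close>-positions of \<open>v\<close>,
  in \<open>Tr(w(X,Y))\<close> is \<open>N(w)(v)\<close>: reordering the generators picked up by the walk starting at
  \<open>i\<close> produces exactly the Koszul sign of the rotation \<open>\<tau>\<^sup>m\<^sup>-\<^sup>i\<close>.\<close>

section \<open>The exterior algebra\<close>

lemma ext_mult_zero_left [simp]: "ext_mult (\<lambda>_. 0) b = (\<lambda>_. (0::'a::field_char_0))"
  by (simp add: ext_mult_def fun_eq_iff)

lemma ext_mult_zero_right [simp]: "ext_mult a (\<lambda>_. 0) = (\<lambda>_. (0::'a::field_char_0))"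
  by (simp add: ext_mult_def fun_eq_iff)

lemma ext_scalar_0 [simp]: "ext_scalar 0 = (\<lambda>_. (0::'a::field_char_0))"
  by (simp add: ext_scalar_def fun_eq_iff)

lemma ext_deg1_0 [simp]: "ext_deg1 (\<lambda>_. 0) = (\<lambda>_. (0::'a::field_char_0))"
  by (simp add: ext_deg1_def fun_eq_iff)

definition ext_gen :: "nat \<Rightarrow> ('a::field_char_0) U" where
  "ext_gen i = (\<lambda>T. if T = {i} then 1 else 0)"

lemma ext_deg1_indicator: "ext_deg1 (\<lambda>q. if q = i then 1 else 0) = ext_gen i"
proof -
  have "(card T = 1 \<and> the_elem T = i) \<longleftrightarrow> T = {i}" for T :: "nat set"
    by (auto simp: card_1_singleton_iff)
  then show ?thesis unfolding ext_deg1_def ext_gen_def fun_eq_iff by (metis (no_types, lifting))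
qed

lemma ext_mult_scalar_one:
  "ext_mult (ext_scalar 1) b T = (if finite T then b T else (0::'a::field_char_0))"
proof (cases "finite T")
  case True
  have "(\<Sum>A\<in>Pow T. ext_sign A (T - A) * ext_scalar 1 A * b (T - A)) =
        (\<Sum>A\<in>Pow T. if A = {} then b T else 0)"
    by (rule sum.cong) (auto simp: ext_scalar_def ext_sign_def)
  also have "\<dots> = b T" using True by (simp add: sum.delta')
  finally show ?thesis using True by (simp add: ext_mult_def)
qed (simp add: ext_mult_def)

lemma ext_sign_singleton: "ext_sign {p} (T - {p}) = ((-1) ^ card {q\<in>T. q < p} :: 'a::field_char_0)"
proof -
  have "{(i, j). i \<in> {p} \<and> j \<in> T - {p} \<and> j < i} = (\<lambda>q. (p, q)) ` {q\<in>T. q < p}" by auto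
  moreover have "card ((\<lambda>q. (p, q)) ` {q\<in>T. q < p}) = card {q\<in>T. q < p}"
    by (rule card_image) (auto simp: inj_on_def)
  ultimately show ?thesis by (simp add: ext_sign_def)
qed

lemma ext_mult_gen:
  "ext_mult (ext_gen p) b T =
    (if finite T \<and> p \<in> T then (-1) ^ card {q\<in>T. q < p} * b (T - {p}) else (0::'a::field_char_0))"
proof (cases "finite T")
  case True
  have "(\<Sum>A\<in>Pow T. ext_sign A (T - A) * ext_gen p A * b (T - A)) =
        (\<Sum>A\<in>Pow T. if A = {p} then ext_sign {p} (T - {p}) * b (T - {p}) else 0)"
    by (rule sum.cong) (auto simp: ext_gen_def)
  also have "\<dots> = (if p \<in> T then ext_sign {p} (T - {p}) * b (T - {p}) else 0)"
    using True by (simp add: sum.delta')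
  finally show ?thesis using True by (simp add: ext_mult_def ext_sign_singleton)
qed (simp add: ext_mult_def)

section \<open>Walks around the cycle of a word\<close>

definition cycle_X :: "letter list \<Rightarrow> nat \<Rightarrow> nat \<Rightarrow> 'a::field_char_0" where
  "cycle_X v i j = (if i < length v \<and> j = Suc i mod length v \<and> v ! i = LX then 1 else 0)"

definition cycle_Y :: "letter list \<Rightarrow> nat \<Rightarrow> nat \<Rightarrow> nat \<Rightarrow> 'a::field_char_0" where
  "cycle_Y v i j = (if i < length v \<and> j = Suc i mod length v \<and> v ! i = LY
                    then (\<lambda>q. if q = i then 1 else 0) else (\<lambda>_. 0))"

lemma finite_cycle_Y_support: "finite {q. cycle_Y v i j q \<noteq> 0}"
proof -
  have "{q. cycle_Y v i j q \<noteq> 0} \<subseteq> {i}" by (auto simp: cycle_Y_def split: if_splits)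
  then show ?thesis using finite_subset by blast
qed

text \<open>The entry \<open>(i, Suc i mod length v)\<close> of the matrix substituted for the letter \<open>a\<close>, the only
  possibly nonzero entry in row \<open>i\<close>.\<close>

definition cycle_letter :: "letter list \<Rightarrow> letter \<Rightarrow> nat \<Rightarrow> ('a::field_char_0) U" where
  "cycle_letter v a i =
     (if v ! i = a then (case a of LX \<Rightarrow> ext_scalar 1 | LY \<Rightarrow> ext_gen i) else (\<lambda>_. 0))"

fun cycle_walk :: "letter list \<Rightarrow> nat \<Rightarrow> letter list \<Rightarrow> ('a::field_char_0) U" where
  "cycle_walk v i [] = ext_scalar 1"
| "cycle_walk v i (a # u) = ext_mult (cycle_letter v a i) (cycle_walk v (Suc i mod length v) u)"

fun reads_from :: "letter list \<Rightarrow> nat \<Rightarrow> letter list \<Rightarrow> bool" where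
  "reads_from v i [] = True"
| "reads_from v i (a # u) = (v ! i = a \<and> reads_from v (Suc i mod length v) u)"

fun walk_Y_positions :: "letter list \<Rightarrow> nat \<Rightarrow> letter list \<Rightarrow> nat list" where
  "walk_Y_positions v i [] = []"
| "walk_Y_positions v i (a # u) =
     (if a = LY then [i] else []) @ walk_Y_positions v (Suc i mod length v) u"

fun inversions :: "nat list \<Rightarrow> nat" where
  "inversions [] = 0"
| "inversions (p # l) = length (filter (\<lambda>q. q < p) l) + inversions l"

lemma cycle_walk_eq:
  "cycle_walk v i u T =
    (if reads_from v i u \<and> distinct (walk_Y_positions v i u) \<and> set (walk_Y_positions v i u) = T
     then (-1) ^ inversions (walk_Y_positions v i u) else (0::'a::field_char_0))"
proof (induction u arbitrary: i T)
  case Nil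
  then show ?case by (auto simp: ext_scalar_def)
next
  case (Cons a u)
  define i' where "i' = Suc i mod length v"
  let ?L = "walk_Y_positions v i' u"
  have reads: "reads_from v i (a # u) = (v ! i = a \<and> reads_from v i' u)"
    by (simp add: i'_def)
  show ?case
  proof (cases "v ! i = a")
    case False
    then show ?thesis by (simp add: cycle_letter_def)
  next
    case True
    show ?thesis
    proof (cases a)
      case LX
      then show ?thesis
        using True Cons.IH[of i' T] by (auto simp: cycle_letter_def ext_mult_scalar_one i'_def)
    next
      case LY
      have walk: "cycle_walk v i (a # u) T = (if finite T \<and> i \<in> T
          then (-1) ^ card {q\<in>T. q < i} * cycle_walk v i' u (T - {i}) else 0)"
        using True LY by (simp add: cycle_letter_def ext_mult_gen i'_def)
      have positions: "walk_Y_positions v i (a # u) = i # ?L" using LY by (simp add: i'_def)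
      show ?thesis
      proof (cases "reads_from v i' u \<and> distinct (i # ?L) \<and> set (i # ?L) = T")
        case good: True
        then have "{q\<in>T. q < i} = set (filter (\<lambda>q. q < i) ?L)" by auto
        then have "card {q\<in>T. q < i} = length (filter (\<lambda>q. q < i) ?L)"
          using good distinct_card[of "filter (\<lambda>q. q < i) ?L"] by simp
        then show ?thesis unfolding walk positions reads Cons.IH[of i' "T - {i}"]
          using good True by (auto simp: power_add)
      next
        case bad: False
        then have "\<not> (finite T \<and> i \<in> T \<and> reads_from v i' u \<and> distinct ?L \<and> set ?L = T - {i})"
          by auto
        then show ?thesis unfolding walk positions reads Cons.IH[of i' "T - {i}"] using bad by auto
      qed
    qed
  qed
qed

lemma Suc_mod_less: "i < (m::nat) \<Longrightarrow> Suc i mod m < m"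
  by (rule mod_less_divisor) linarith

lemma cycle_entry_eq:
  assumes "i < length v"
  shows "(case a of LX \<Rightarrow> ext_scalar (cycle_X v i l) | LY \<Rightarrow> ext_deg1 (cycle_Y v i l)) =
         (if l = Suc i mod length v then cycle_letter v a i else (\<lambda>_. (0::'a::field_char_0)))"
  using assms by (cases a) (auto simp: cycle_X_def cycle_Y_def cycle_letter_def ext_deg1_indicator)

lemma word_mat_cycle:
  assumes "i < length v"
  shows "word_mat (length v) (cycle_X v) (cycle_Y v) u i j =
    (if j = (i + length u) mod length v then cycle_walk v i u else (\<lambda>_. (0::'a::field_char_0)))"
  using assms
proof (induction u arbitrary: i)
  case Nil
  then show ?case by (auto simp: mat_one_U_def)
next
  case (Cons a u)
  let ?m = "length v"
  let ?W = "word_mat ?m (cycle_X v) (cycle_Y v) u :: nat \<Rightarrow> nat \<Rightarrow> 'a U"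
  define i' where "i' = Suc i mod ?m"
  have i': "i' < ?m" unfolding i'_def using Cons.prems by (rule Suc_mod_less)
  have "word_mat ?m (cycle_X v) (cycle_Y v) (a # u) i j = (\<lambda>T. \<Sum>l<?m.
          ext_mult (case a of LX \<Rightarrow> ext_scalar (cycle_X v i l) | LY \<Rightarrow> ext_deg1 (cycle_Y v i l))
            (?W l j) T)"
    by (cases a) (simp_all add: mat_mult_U_def)
  also have "\<dots> = (\<lambda>T. \<Sum>l<?m. if l = i' then ext_mult (cycle_letter v a i) (?W i' j) T else 0)"
    unfolding cycle_entry_eq[OF Cons.prems] i'_def by (intro ext sum.cong) auto
  also have "\<dots> = ext_mult (cycle_letter v a i) (?W i' j)"
    using i' by simp
  also have "\<dots> = (if j = (i + length (a # u)) mod ?m then cycle_walk v i (a # u) else (\<lambda>_. 0))"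
  proof -
    have "(j = (i' + length u) mod ?m) = (j = (i + length (a # u)) mod ?m)"
      unfolding i'_def by (simp add: mod_add_left_eq)
    then show ?thesis using Cons.IH[OF i'] by (simp add: i'_def)
  qed
  finally show ?case .
qed

lemma mod_add_eq_self_iff: "i < (m::nat) \<Longrightarrow> (i + L) mod m = i \<longleftrightarrow> m dvd L"
  by (metis add_diff_cancel_left' mod_eq_dvd_iff_nat mod_if nat_le_iff_add)

lemma trace_word_mat_cycle:
  "trace_U (length v) (word_mat (length v) (cycle_X v) (cycle_Y v) u) T =
    (if length v dvd length u then (\<Sum>i<length v. cycle_walk v i u T) else (0::'a::field_char_0))"
  unfolding trace_U_def by (auto simp: word_mat_cycle mod_add_eq_self_iff eq_commute[of _ "_ mod _"])

lemma reads_from_iff_nth: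
  "i < length v \<Longrightarrow> reads_from v i u \<longleftrightarrow> (\<forall>t<length u. u ! t = v ! ((i + t) mod length v))"
proof (induction u arbitrary: i)
  case (Cons a u)
  then have "Suc i mod length v < length v" by (simp add: Suc_mod_less)
  moreover have "(Suc i mod length v + t) mod length v = (i + Suc t) mod length v" for t
    by (simp add: mod_add_left_eq)
  ultimately show ?case using Cons by (auto simp: All_less_Suc2)
qed simp

lemma reads_from_iff_rotate:
  assumes "i < length v" and "length u = length v"
  shows "reads_from v i u \<longleftrightarrow> u = rotate i v"
proof -
  have "u = rotate i v \<longleftrightarrow> (\<forall>t<length u. u ! t = rotate i v ! t)"
    using assms(2) by (auto intro: nth_equalityI)
  also have "\<dots> \<longleftrightarrow> (\<forall>t<length u. u ! t = v ! ((i + t) mod length v))"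
    using assms(2) by (simp add: nth_rotate)
  finally show ?thesis using reads_from_iff_nth[OF assms(1)] by simp
qed

lemma walk_Y_positions_eq:
  "i < length v \<Longrightarrow> walk_Y_positions v i u =
     map (\<lambda>t. (i + t) mod length v) (filter (\<lambda>t. u ! t = LY) [0..<length u])"
proof (induction u arbitrary: i)
  case (Cons a u)
  then have "Suc i mod length v < length v" by (simp add: Suc_mod_less)
  note IH = Cons.IH[OF this]
  have shift: "(\<lambda>t. (Suc i mod length v + t) mod length v) = (\<lambda>t. (i + t) mod length v) \<circ> Suc"
    by (auto simp: mod_add_left_eq)
  have filter_Suc: "filter (\<lambda>t. (a # u) ! t = LY) (map Suc [0..<length u]) =
      map Suc (filter (\<lambda>t. u ! t = LY) [0..<length u])"
    by (simp add: filter_map comp_def)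
  have upt: "[0..<Suc (length u)] = 0 # map Suc [0..<length u]"
    by (simp add: map_Suc_upt upt_conv_Cons del: upt_Suc)
  show ?case unfolding walk_Y_positions.simps IH shift length_Cons upt filter.simps filter_Suc
    using Cons.prems by (simp del: upt_Suc)
qed simp

section \<open>The norm operator\<close>

lemma wdeg_simps [simp]:
  "wdeg [] = 0" "wdeg (a # l) = ldeg a + wdeg l" "wdeg (l1 @ l2) = wdeg l1 + wdeg l2"
  by (simp_all add: wdeg_def)

lemma wdeg_eq_length_filter: "wdeg l = length (filter (\<lambda>a. a = LY) l)"
proof (induction l)
  case (Cons a l) then show ?case by (cases a) auto
qed simp

lemma wdeg_rotate [simp]: "wdeg (rotate i v) = wdeg v"
  by (metis append_take_drop_id rotate_drop_take wdeg_simps(3) add.commute)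

lemma funpow_tau:
  assumes "j \<le> length w"
  shows "(tau ^^ j) ((1::'a::field_char_0), w) =
    ((-1) ^ ((wdeg w - 1) * wdeg (drop (length w - j) w)), drop (length w - j) w @ take (length w - j) w)"
  using assms
proof (induction j)
  case (Suc j)
  define d where "d = length w - Suc j"
  have d: "d < length w" and j: "length w - j = Suc d" using Suc.prems unfolding d_def by auto
  have take: "take (Suc d) w = take d w @ [w ! d]" using d by (simp add: take_Suc_conv_app_nth)
  have drop: "drop d w = w ! d # drop (Suc d) w" using d by (simp add: Cons_nth_drop_Suc)
  have split: "wdeg w = wdeg (take d w) + ldeg (w ! d) + wdeg (drop (Suc d) w)"
    by (metis append_take_drop_id drop wdeg_simps(2,3) add.assoc)
  let ?W = "drop (Suc d) w @ take d w @ [w ! d]"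
  have tau: "tau (c, ?W) = (c * (-1) ^ (ldeg (w ! d) * wdeg (drop (Suc d) w @ take d w)),
      w ! d # drop (Suc d) w @ take d w)" for c :: 'a
    by (simp add: tau_def butlast_append)
  have "(tau ^^ Suc j) ((1::'a), w) = tau ((-1) ^ ((wdeg w - 1) * wdeg (drop (Suc d) w)), ?W)"
    using Suc j take by simp
  also have "\<dots> = ((-1) ^ ((wdeg w - 1) * wdeg (drop d w)), drop d w @ take d w)"
  proof (cases "w ! d")
    case LY
    then have "wdeg w - 1 = wdeg (drop (Suc d) w @ take d w)" using split by simp
    then show ?thesis unfolding tau drop using LY by (simp add: power_add algebra_simps)
  qed (unfold tau drop, simp)
  finally show ?case unfolding d_def by simp
qed simp

lemma normN_eq_sum_rotate:
  "normN w v = (\<Sum>j<length w. if rotate (length w - j) w = v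
      then (-1) ^ ((wdeg w - 1) * wdeg (drop (length w - j) w)) else (0::'a::field_char_0))"
proof -
  have "drop k w @ take k w = rotate k w" if "k \<le> length w" for k
    using that by (cases "k = length w") (auto simp: rotate_drop_take)
  then show ?thesis unfolding normN_def by (intro sum.cong refl) (simp add: funpow_tau)
qed

lemma normN_nonzero_imp_rotate:
  assumes "(normN w v :: 'a::field_char_0) \<noteq> 0"
  obtains j where "v = rotate j w"
proof -
  have "\<exists>j. rotate (length w - j) w = v"
  proof (rule ccontr)
    assume "\<nexists>j. rotate (length w - j) w = v"
    then have "(normN w v :: 'a) = 0" unfolding normN_eq_sum_rotate by simp
    with assms show False by contradiction
  qed
  with that show thesis by metis
qed

section \<open>Signs of closed walks\<close>

lemma inversions_append:
  "inversions (xs @ ys) =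
     inversions xs + inversions ys + (\<Sum>x\<leftarrow>xs. length (filter (\<lambda>q. q < x) ys))"
  by (induction xs) auto

lemma inversions_sorted: "sorted_wrt (<) l \<Longrightarrow> inversions l = 0"
proof (induction l)
  case (Cons p l)
  then have "filter (\<lambda>q. q < p) l = []" by (auto simp: filter_empty_conv)
  then show ?case using Cons by simp
qed simp

lemma map_add_mod_upt: "i < m \<Longrightarrow> map (\<lambda>t. (i + t) mod m) [0..<m] = [i..<m] @ [0..<i]"
proof (rule nth_equalityI)
  fix t assume i: "i < m" and "t < length (map (\<lambda>t. (i + t) mod m) [0..<m])"
  then have t: "t < m" by simp
  show "map (\<lambda>t. (i + t) mod m) [0..<m] ! t = ([i..<m] @ [0..<i]) ! t"
  proof (cases "t < m - i")
    case False
    then have "(i + t) mod m = i + t - m" using t i by (simp add: le_mod_geq)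
    then show ?thesis using t i False by (simp add: nth_append)
  qed (use t in \<open>simp add: nth_append\<close>)
qed simp

lemma walk_Y_positions_rotate:
  assumes "i < length v"
  shows "walk_Y_positions v i (rotate i v) = filter (\<lambda>p. v ! p = LY) ([i..<length v] @ [0..<i])"
proof -
  let ?f = "\<lambda>t. (i + t) mod length v"
  have "filter (\<lambda>t. rotate i v ! t = LY) [0..<length v] =
      filter ((\<lambda>p. v ! p = LY) \<circ> ?f) [0..<length v]"
    by (intro filter_cong refl) (simp add: nth_rotate)
  then have "walk_Y_positions v i (rotate i v) = map ?f (filter ((\<lambda>p. v ! p = LY) \<circ> ?f) [0..<length v])"
    using walk_Y_positions_eq[OF assms] by simp
  also have "\<dots> = filter (\<lambda>p. v ! p = LY) (map ?f [0..<length v])" by (simp add: filter_map)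
  finally show ?thesis using map_add_mod_upt[OF assms] by simp
qed

lemma wdeg_take: "i \<le> length v \<Longrightarrow> wdeg (take i v) = length (filter (\<lambda>p. v ! p = LY) [0..<i])"
proof -
  assume "i \<le> length v"
  then have "take i v = map ((!) v) [0..<i]" by (intro nth_equalityI) auto
  then show ?thesis by (simp add: wdeg_eq_length_filter filter_map comp_def)
qed

text \<open>The walk from \<open>i\<close> meets the \<open>y\<close>-positions \<open>B\<close> of \<open>v\<close> at or after \<open>i\<close> before those \<open>A\<close>
  before \<open>i\<close>; reordering gives \<open>|A| |B|\<close> inversions, which has the parity of
  \<open>(|A| + |B| - 1) |A|\<close>, the exponent in \<open>\<tau>\<^sup>m\<^sup>-\<^sup>i\<close>.\<close>

lemma sign_walk_rotate:
  assumes i: "i < length v" and w: "w = rotate i v"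
  shows "((-1::'a::field_char_0) ^ inversions (walk_Y_positions v i w)) =
    (-1) ^ ((wdeg w - 1) * wdeg (drop (length v - i) w))"
proof -
  let ?P = "\<lambda>p. v ! p = LY"
  define A where "A = filter ?P [0..<i]"
  define B where "B = filter ?P [i..<length v]"
  have inv: "inversions (walk_Y_positions v i w) = length B * length A"
  proof -
    have "inversions (B @ A) = (\<Sum>x\<leftarrow>B. length (filter (\<lambda>q. q < x) A))"
      unfolding inversions_append A_def B_def
      by (simp add: inversions_sorted sorted_wrt_filter)
    also have "\<dots> = (\<Sum>x\<leftarrow>B. length A)"
    proof (intro arg_cong[where f = sum_list] map_cong refl)
      fix x assume "x \<in> set B"
      then have "filter (\<lambda>q. q < x) A = A" unfolding A_def B_def by (intro filter_True) auto
      then show "length (filter (\<lambda>q. q < x) A) = length A" by simp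
    qed
    finally show ?thesis using walk_Y_positions_rotate[OF i] w
      unfolding A_def B_def by (simp add: sum_list_triv)
  qed
  have "drop (length v - i) w = take i v" using w i by (simp add: rotate_drop_take)
  then have A: "wdeg (drop (length v - i) w) = length A"
    unfolding A_def using wdeg_take[of i v] i by simp
  have "wdeg w = wdeg (take i v) + wdeg (drop i v)"
    using w by (metis append_take_drop_id wdeg_rotate wdeg_simps(3))
  also have "drop i v = map ((!) v) [i..<length v]" by (intro nth_equalityI) auto
  finally have AB: "wdeg w = length A + length B"
    unfolding A_def B_def using wdeg_take[of i v] i
    by (simp add: wdeg_eq_length_filter filter_map comp_def)
  show ?thesis
  proof (cases "length A = 0")
    case False
    then have "wdeg w - 1 = length B + (length A - 1)" using AB by linarith
    then have "(wdeg w - 1) * length A = length B * length A + (length A - 1) * length A"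
      by (simp add: add_mult_distrib)
    then show ?thesis using inv A by (simp add: power_add)
  qed (use inv A in simp)
qed

section \<open>Traces of words in the cycle matrices\<close>

definition Y_positions :: "letter list \<Rightarrow> nat set" where
  "Y_positions v = {p. p < length v \<and> v ! p = LY}"

lemma rotate_diff_eq_iff:
  assumes "i \<le> length v" and "length w = length v"
  shows "rotate (length v - i) w = v \<longleftrightarrow> w = rotate i v"
proof
  assume "rotate (length v - i) w = v"
  then have "rotate i v = rotate (i + (length v - i)) w" by (metis rotate_rotate)
  with assms show "w = rotate i v" by simp
next
  assume "w = rotate i v"
  then have "rotate (length v - i) w = rotate (length v - i + i) v" by (simp add: rotate_rotate)
  with assms show "rotate (length v - i) w = v" by simp
qed

lemma cycle_walk_Y_positions:
  assumes i: "i < length v" and len: "length w = length v"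
  shows "cycle_walk v i w (Y_positions v) = (if rotate (length v - i) w = v
      then (-1) ^ ((wdeg w - 1) * wdeg (drop (length v - i) w)) else (0::'a::field_char_0))"
proof -
  have "rotate (length v - i) w = v \<longleftrightarrow> w = rotate i v"
    using i len by (intro rotate_diff_eq_iff) simp_all
  moreover have "distinct (walk_Y_positions v i (rotate i v))"
    and "set (walk_Y_positions v i (rotate i v)) = Y_positions v"
    using i by (auto simp: walk_Y_positions_rotate Y_positions_def)
  ultimately show ?thesis
    using reads_from_iff_rotate[OF i len] sign_walk_rotate[OF i, where 'a = 'a]
    by (auto simp: cycle_walk_eq)
qed

lemma trace_word_mat_cycle_self:
  assumes "length w = length v"
  shows "trace_U (length v) (word_mat (length v) (cycle_X v) (cycle_Y v) w) (Y_positions v) =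
    (normN w v :: 'a::field_char_0)"
  unfolding trace_word_mat_cycle normN_eq_sum_rotate assms
  by (simp add: cycle_walk_Y_positions assms)

lemma trace_word_mat_cycle_nonzero:
  assumes "trace_U (length v) (word_mat (length v) (cycle_X v) (cycle_Y v) u) T \<noteq> (0::'a::field_char_0)"
    and "u \<noteq> []" and "length u \<le> length v"
  obtains i where "u = rotate i v"
proof -
  from assms(1) obtain i where "length v dvd length u" and i: "i < length v"
    and "(cycle_walk v i u T :: 'a) \<noteq> 0"
    unfolding trace_word_mat_cycle by (metis lessThan_iff sum.neutral)
  then have "reads_from v i u" by (simp add: cycle_walk_eq split: if_splits)
  moreover have "length u = length v"
    using \<open>length v dvd length u\<close> assms(2,3) by (simp add: dvd_imp_le le_antisym)
  ultimately show thesis using that reads_from_iff_rotate[OF i] by blast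
qed

lemma rep_set_rotate_eq:
  assumes "rep_set TYPE('a::field_char_0) S" and "u \<in> S" and "w \<in> S" and "u = rotate j w"
  shows "u = w"
proof -
  have "w \<noteq> [] \<and> (normN w :: letter list \<Rightarrow> 'a) \<noteq> (\<lambda>_. 0)"
    using assms(1,3) unfolding rep_set_def by blast
  then have "\<exists>!s. s \<in> S \<and> (\<exists>j. s = rotate j w)"
    using assms(1) unfolding rep_set_def by blast
  moreover have "w = rotate 0 w" by simp
  ultimately show ?thesis using assms(2-4) by blast
qed

theorem mainTheorem20:
  fixes S :: "letter list set" and c :: "letter list \<Rightarrow> 'a::field_char_0"
  assumes "rep_set TYPE('a) S"
    and "finite {w \<in> S. c w \<noteq> 0}"
    and "{w \<in> S. c w \<noteq> 0} \<noteq> {}"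
  shows "\<exists>(n::nat) (X :: nat \<Rightarrow> nat \<Rightarrow> 'a) (Y :: nat \<Rightarrow> nat \<Rightarrow> nat \<Rightarrow> 'a).
           (\<forall>i j. finite {m. Y i j m \<noteq> 0}) \<and>
           (\<lambda>T. \<Sum>w \<in> {w \<in> S. c w \<noteq> 0}. c w * trace_U n (word_mat n X Y w) T) \<noteq> (\<lambda>_. 0)"
proof -
  define F where "F = {w \<in> S. c w \<noteq> 0}"
  have "Max (length ` F) \<in> length ` F" using assms(2,3) unfolding F_def by (intro Max_in) auto
  then obtain w where "w \<in> F" and longest: "length w = Max (length ` F)" by auto
  then have wS: "w \<in> S" and "c w \<noteq> 0" unfolding F_def by auto
  then have "w \<noteq> []" and "(normN w :: letter list \<Rightarrow> 'a) \<noteq> (\<lambda>_. 0)"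
    using assms(1) unfolding rep_set_def by auto
  then obtain v where Nv: "(normN w v :: 'a) \<noteq> 0" by auto
  then obtain j where v: "v = rotate j w" by (rule normN_nonzero_imp_rotate)
  let ?tr = "\<lambda>u. trace_U (length v) (word_mat (length v) (cycle_X v) (cycle_Y v) u) (Y_positions v) :: 'a"
  have "?tr u = 0" if "u \<in> F" and "u \<noteq> w" for u
  proof (rule ccontr)
    assume "?tr u \<noteq> 0"
    have "u \<in> S" and "u \<noteq> []" using \<open>u \<in> F\<close> assms(1) unfolding F_def rep_set_def by auto
    moreover have "length u \<le> length v"
      using \<open>u \<in> F\<close> assms(2) longest v unfolding F_def by simp
    ultimately obtain i where "u = rotate i v"
      using \<open>?tr u \<noteq> 0\<close> trace_word_mat_cycle_nonzero by blast
    then have "u = rotate (i + j) w" using v by (simp add: rotate_rotate)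
    then show False using rep_set_rotate_eq[OF assms(1) \<open>u \<in> S\<close> wS] \<open>u \<noteq> w\<close> by blast
  qed
  then have "(\<Sum>u\<in>F. c u * ?tr u) = c w * ?tr w"
    using \<open>w \<in> F\<close> assms(2) unfolding F_def by (intro sum.remove[THEN trans]) (auto intro: sum.neutral)
  also have "?tr w = normN w v" by (rule trace_word_mat_cycle_self) (simp add: v)
  finally have "(\<Sum>u\<in>F. c u * ?tr u) \<noteq> 0" using \<open>c w \<noteq> 0\<close> Nv by simp
  then have "(\<lambda>T. \<Sum>u\<in>F. c u * trace_U (length v)
      (word_mat (length v) (cycle_X v) (cycle_Y v) u) T) \<noteq> (\<lambda>_. 0)"
    by (auto dest: fun_cong[where x = "Y_positions v"])
  then show ?thesis unfolding F_def using finite_cycle_Y_support by blast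
qed

end
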